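(* Let $X$ be a real Banach space. The following statements are equivalent. (1) $X$ is CLUR. (2) $S_X$ is sup-compact on $X\setminus\{0\}$. (3) For every $x\in X\setminus\{0\}$, $Q_{S_X}(x)$ is compact and $Q_{S_X}(x,\frac1n)\xrightarrow{V}Q_{S_X}(x)$. (4) For every $x\in X\setminus\{0\}$, $Q_{S_X}(x)$ is compact and $Q_{S_X}(x,\frac1n)\xrightarrow{H}Q_{S_X}(x)$. (5) $Q_{S_X}(x)$ is compact for every $x\in X\setminus\{0\}$ and $S_X$ is strongly remotal on $X\setminus\{0\}$. (6) $\alpha(Q_{S_X}(x,\frac1n))\to 0$ for every $x\in X\setminus\{0\}$.
   Context: $B_X,S_X$ are the closed unit ball and unit sphere of $X$. For non-empty bounded $F$, $x\in X$, $\delta\ge0$: $r(F,x)=\sup_{y\in F}\|x-y\|$, $Q_F(x,\delta)=\{y\in F:\|x-y\|\ge r(F,x)-\delta\}$, $Q_F(x)=Q_F(x,0)$. $F$ is sup-compact on $A$ if for each $x\in A$ every sequence $(y_n)$ in $F$ with $\|x-y_n\|\to r(F,x)$ has a subsequence converging to an element of $F$. $F$ is strongly remotal on $A$ if for every $x\in A$ and $\epsilon>0$ there is $\delta>0$ with $Q_F(x,\delta)\subseteq Q_F(x)+\epsilon B_X$. $X$ is CLUR if whenever $x\in S_X$ and $(x_n)\subseteq S_X$ satisfy $\|\frac{x_n+x}{2}\|\to1$, $(x_n)$ has a convergent subsequence. For closed bounded sets $C_n,C_0$: $C_n\xrightarrow{V}C_0$ means both (a) for every open $U\supseteq C_0$,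 eventually $C_n\subseteq U$, and (b) for every open $U$ with $C_0\cap U\ne\emptyset$, eventually $C_n\cap U\neq\emptyset$; $C_n\xrightarrow{H}C_0$ means for every $\epsilon>0$, eventually $C_n\subseteq C_0+\epsilon B_X$ and $C_0\subseteq C_n+\epsilon B_X$. The Kuratowski measure of non-compactness is $\alpha(A)=\inf\{\epsilon>0: A\subseteq E+\epsilon B_X$ for some finite $E\subseteq X\}$. *)

theory Defs
  imports "HOL-Analysis.Analysis"
begin

definition rad :: "'a::real_normed_vector set \<Rightarrow> 'a \<Rightarrow> real" where
  "rad F x = (SUP y\<in>F. norm (x - y))"

definition Qset :: "'a::real_normed_vector set \<Rightarrow> 'a \<Rightarrow> real \<Rightarrow> 'a set" where
  "Qset F x \<delta> = {y \<in> F. norm (x - y) \<ge> rad F x - \<delta>}"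

definition enlarge :: "'a::real_normed_vector set \<Rightarrow> real \<Rightarrow> 'a set" where
  "enlarge A \<epsilon> = {a + b | a b. a \<in> A \<and> b \<in> cball 0 \<epsilon>}"

definition sup_compact_on :: "'a::real_normed_vector set \<Rightarrow> 'a set \<Rightarrow> bool" where
  "sup_compact_on F A \<longleftrightarrow> (\<forall>x\<in>A. \<forall>y::nat \<Rightarrow> 'a. (\<forall>n. y n \<in> F) \<and>
      ((\<lambda>n. norm (x - y n)) \<longlonglongrightarrow> rad F x) \<longrightarrow>
      (\<exists>r l. strict_mono r \<and> l \<in> F \<and> (y \<circ> r) \<longlonglongrightarrow> l))"

definition strongly_remotal_on :: "'a::real_normed_vector set \<Rightarrow> 'a set \<Rightarrow> bool" where
  "strongly_remotal_on F A \<longleftrightarrow> (\<forall>x\<in>A. \<forall>\<epsilon>>0. \<exists>\<delta>>0.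
      Qset F x \<delta> \<subseteq> enlarge (Qset F x 0) \<epsilon>)"

definition CLUR :: "'a::real_normed_vector itself \<Rightarrow> bool" where
  "CLUR _ \<longleftrightarrow> (\<forall>x::'a. \<forall>xs::nat \<Rightarrow> 'a. x \<in> sphere 0 1 \<and> (\<forall>n. xs n \<in> sphere 0 1) \<and>
      ((\<lambda>n. norm ((1/2) *\<^sub>R (xs n + x))) \<longlonglongrightarrow> 1) \<longrightarrow>
      (\<exists>r l. strict_mono r \<and> (xs \<circ> r) \<longlonglongrightarrow> l))"

definition vietoris_conv :: "(nat \<Rightarrow> 'a::topological_space set) \<Rightarrow> 'a set \<Rightarrow> bool" where
  "vietoris_conv C C0 \<longleftrightarrow>
     (\<forall>U. open U \<and> C0 \<subseteq> U \<longrightarrow> (\<forall>\<^sub>F n in sequentially. C n \<subseteq> U)) \<and>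
     (\<forall>U. open U \<and> C0 \<inter> U \<noteq> {} \<longrightarrow> (\<forall>\<^sub>F n in sequentially. C n \<inter> U \<noteq> {}))"

definition hausdorff_conv :: "(nat \<Rightarrow> 'a::real_normed_vector set) \<Rightarrow> 'a set \<Rightarrow> bool" where
  "hausdorff_conv C C0 \<longleftrightarrow> (\<forall>\<epsilon>>0. \<forall>\<^sub>F n in sequentially.
      C n \<subseteq> enlarge C0 \<epsilon> \<and> C0 \<subseteq> enlarge (C n) \<epsilon>)"

definition kuratowski :: "'a::real_normed_vector set \<Rightarrow> real" where
  "kuratowski A = Inf {\<epsilon>. \<epsilon> > 0 \<and> (\<exists>E. finite E \<and> A \<subseteq> enlarge E \<epsilon>)}"

end

theory Submission
  imports Defs
begin

text \<open>
  For x \<noteq> 0 the points of S_X farthest from x are those y with ||x - y|| = ||x|| + 1, and a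
  sequence y_n in S_X is maximizing for x exactly when ||y_n + x/||x|| || tends to 2.
  So sup-compactness of S_X at every x \<noteq> 0 is a reformulation of CLUR.

  The other conditions are equivalent to sup-compactness pointwise, for any closed bounded F
  in a Banach space and any sequence \<delta>_n > 0 tending to 0.  If F is sup-compact at x, then
  Q_F(x) is compact and F is strongly remotal at x, since a sequence violating remotality would
  have a subsequence converging into Q_F(x).  Strong remotality gives Hausdorff convergence of
  the sets Q_F(x,\<delta>_n), hence Vietoris convergence, and also \<alpha>(Q_F(x,\<delta>_n)) \<rightarrow> 0.
  Conversely, Vietoris convergence to a compact limit, or \<alpha>(Q_F(x,\<delta>_n)) \<rightarrow> 0, means that
  a maximizing sequence eventually lies in finitely many \<epsilon>-balls, for every \<epsilon>.  By
  completeness, such a sequence has a convergent subsequence.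
\<close>

lemma enlarge_eq_UN_cball: "enlarge A e = (\<Union>a\<in>A. cball a e)"
proof (intro equalityI subsetI)
  fix z assume "z \<in> enlarge A e"
  then obtain a b where "z = a + b" "a \<in> A" "norm b \<le> e"
    by (auto simp: enlarge_def)
  then have "dist a z \<le> e"
    by (simp add: dist_norm norm_minus_commute)
  with \<open>a \<in> A\<close> show "z \<in> (\<Union>a\<in>A. cball a e)"
    by auto
next
  fix z assume "z \<in> (\<Union>a\<in>A. cball a e)"
  then obtain a where "a \<in> A" "norm (z - a) \<le> e"
    by (auto simp: dist_norm norm_minus_commute)
  then show "z \<in> enlarge A e"
    unfolding enlarge_def by (intro CollectI exI[of _ a] exI[of _ "z - a"]) auto
qed

lemma enlarge_subset_UN_ball: "r < e \<Longrightarrow> enlarge A r \<subseteq> (\<Union>a\<in>A. ball a e)"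
  unfolding enlarge_eq_UN_cball by fastforce

lemma subset_enlarge: "0 \<le> e \<Longrightarrow> A \<subseteq> enlarge A e"
  unfolding enlarge_eq_UN_cball by force

lemma enlarge_subset_enlarge_centres:
  assumes "A \<subseteq> (\<Union>c\<in>K. ball c r)"
  shows "enlarge A s \<subseteq> enlarge K (r + s)"
proof
  fix z assume "z \<in> enlarge A s"
  then obtain a c where "c \<in> K" "dist c a < r" "dist a z \<le> s"
    using assms by (force simp: enlarge_eq_UN_cball)
  then have "dist c z \<le> r + s"
    by (smt (verit) dist_triangle)
  with \<open>c \<in> K\<close> show "z \<in> enlarge K (r + s)"
    by (auto simp: enlarge_eq_UN_cball)
qed

lemma bounded_subset_enlarge_zero:
  assumes "bounded A"
  obtains R where "0 < R" "A \<subseteq> enlarge {0} R"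
  using assms by (auto simp: bounded_pos enlarge_eq_UN_cball subset_eq)

lemma kuratowski_nonneg:
  assumes "bounded A"
  shows "0 \<le> kuratowski A"
proof -
  obtain R where "0 < R" "A \<subseteq> enlarge {0} R"
    using assms by (rule bounded_subset_enlarge_zero)
  then show ?thesis
    unfolding kuratowski_def by (intro cInf_greatest) (auto intro!: exI[of _ "{0}"])
qed

lemma kuratowski_le:
  assumes "0 < e" "finite E" "A \<subseteq> enlarge E e"
  shows "kuratowski A \<le> e"
  unfolding kuratowski_def
  by (rule cInf_lower) (use assms in \<open>auto intro: bdd_belowI[of _ 0]\<close>)

lemma kuratowski_lessE:
  assumes "bounded A" "kuratowski A < e"
  obtains E where "finite E" "A \<subseteq> (\<Union>c\<in>E. ball c e)"
proof -
  obtain R where "0 < R" "A \<subseteq> enlarge {0} R"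
    using assms(1) by (rule bounded_subset_enlarge_zero)
  then have "{\<epsilon>. 0 < \<epsilon> \<and> (\<exists>E. finite E \<and> A \<subseteq> enlarge E \<epsilon>)} \<noteq> {}"
    by (auto intro!: exI[of _ "{0}"])
  from cInf_lessD[OF this assms(2)[unfolded kuratowski_def]]
  obtain r E where "r < e" "finite E" "A \<subseteq> enlarge E r"
    by blast
  with enlarge_subset_UN_ball[of r e E] show ?thesis
    using that by blast
qed

lemma tendsto_one_over_Suc: "(\<lambda>n. 1 / real (Suc n)) \<longlonglongrightarrow> 0"
  using LIMSEQ_inverse_real_of_nat by (simp add: inverse_eq_divide)

lemma norm_diff_le_rad:
  assumes "bounded F" "y \<in> F"
  shows "norm (x - y) \<le> rad F x"
proof -
  obtain B where B: "\<forall>y\<in>F. norm y \<le> B"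
    using assms(1) by (auto simp: bounded_iff)
  have "bdd_above ((\<lambda>y. norm (x - y)) ` F)"
  proof (rule bdd_aboveI2)
    fix y assume "y \<in> F"
    then show "norm (x - y) \<le> norm x + B"
      using B norm_triangle_ineq4[of x y] by fastforce
  qed
  with assms(2) show ?thesis
    unfolding rad_def by (rule cSUP_upper)
qed

lemma Qset_subset: "Qset F x \<delta> \<subseteq> F"
  unfolding Qset_def by blast

lemma Qset_mono: "\<delta> \<le> \<delta>' \<Longrightarrow> Qset F x \<delta> \<subseteq> Qset F x \<delta>'"
  unfolding Qset_def by auto

lemma eventually_in_Qset:
  assumes "\<forall>n. y n \<in> F" "(\<lambda>n. norm (x - y n)) \<longlonglongrightarrow> rad F x" "0 < \<delta>"
  shows "\<forall>\<^sub>F n in sequentially. y n \<in> Qset F x \<delta>"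
  using order_tendstoD(1)[OF assms(2), of "rad F x - \<delta>"] assms(1,3)
  by (auto simp: Qset_def elim: eventually_mono)

lemma tendsto_rad_imp_limit_in_Qset:
  assumes "(\<lambda>n. norm (x - y n)) \<longlonglongrightarrow> rad F x" "strict_mono r" "(y \<circ> r) \<longlonglongrightarrow> l" "l \<in> F"
  shows "l \<in> Qset F x 0"
proof -
  have "(\<lambda>n. norm (x - (y \<circ> r) n)) \<longlonglongrightarrow> rad F x"
    using LIMSEQ_subseq_LIMSEQ[OF assms(1,2)] by (simp add: comp_def)
  moreover have "(\<lambda>n. norm (x - (y \<circ> r) n)) \<longlonglongrightarrow> norm (x - l)"
    using assms(3) by (intro tendsto_intros)
  ultimately have "norm (x - l) = rad F x"
    by (rule LIMSEQ_unique[symmetric])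
  with assms(4) show ?thesis
    by (simp add: Qset_def)
qed

lemma Qset_tendsto_rad:
  assumes "bounded F" "\<forall>n. y n \<in> Qset F x (d n)" "d \<longlonglongrightarrow> 0"
  shows "(\<lambda>n. norm (x - y n)) \<longlonglongrightarrow> rad F x"
proof (rule real_tendsto_sandwich)
  show "\<forall>\<^sub>F n in sequentially. rad F x - d n \<le> norm (x - y n)"
    using assms(2) by (simp add: Qset_def)
  show "\<forall>\<^sub>F n in sequentially. norm (x - y n) \<le> rad F x"
    using assms(1,2) Qset_subset norm_diff_le_rad by (blast intro: always_eventually)
  show "(\<lambda>n. rad F x - d n) \<longlonglongrightarrow> rad F x"
    using tendsto_diff[OF tendsto_const assms(3)] by simp
qed simp

lemma compact_closure_if_totally_bounded:
  fixes S :: "'a::complete_space set"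
  assumes "\<And>e. 0 < e \<Longrightarrow> \<exists>K. finite K \<and> S \<subseteq> (\<Union>c\<in>K. ball c e)"
  shows "compact (closure S)"
  unfolding compact_eq_totally_bounded
proof (intro conjI allI impI)
  show "complete (closure S)"
    by (simp add: complete_eq_closed)
  fix e :: real assume "0 < e"
  then obtain K where K: "finite K" "S \<subseteq> (\<Union>c\<in>K. ball c (e/2))"
    using assms[of "e/2"] by auto
  have "closure S \<subseteq> (\<Union>c\<in>K. cball c (e/2))"
  proof (rule closure_minimal)
    show "S \<subseteq> (\<Union>c\<in>K. cball c (e/2))"
      using K(2) by (meson UN_mono ball_subset_cball order_trans order_refl)
    show "closed (\<Union>c\<in>K. cball c (e/2))"
      using K(1) by (intro closed_UN) auto
  qed
  also have "\<dots> \<subseteq> (\<Union>c\<in>K. ball c e)"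
    using \<open>0 < e\<close> by (intro UN_mono) (auto simp: subset_eq)
  finally show "\<exists>K. finite K \<and> closure S \<subseteq> (\<Union>c\<in>K. ball c e)"
    using K(1) by blast
qed

lemma range_covered_if_eventually_covered:
  assumes "0 < e" "finite K" "\<forall>\<^sub>F n in sequentially. y n \<in> (\<Union>c\<in>K. ball c e)"
  shows "\<exists>K'. finite K' \<and> range y \<subseteq> (\<Union>c\<in>K'. ball c e)"
proof -
  obtain N where N: "\<And>n. N \<le> n \<Longrightarrow> y n \<in> (\<Union>c\<in>K. ball c e)"
    using assms(3) by (auto simp: eventually_sequentially)
  have "y n \<in> (\<Union>c\<in>K \<union> y ` {..<N}. ball c e)" for n
  proof (cases "n < N")
    case True
    then show ?thesis
      using assms(1) by (intro UN_I[of "y n"]) auto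
  next
    case False
    then show ?thesis
      using N by fastforce
  qed
  then have "range y \<subseteq> (\<Union>c\<in>K \<union> y ` {..<N}. ball c e)"
    by blast
  with assms(2) show ?thesis
    by (intro exI[of _ "K \<union> y ` {..<N}"]) simp
qed

lemma convergent_subseq_if_eventually_covered:
  fixes y :: "nat \<Rightarrow> 'a::complete_space"
  assumes "\<And>e. 0 < e \<Longrightarrow> \<exists>K. finite K \<and> (\<forall>\<^sub>F n in sequentially. y n \<in> (\<Union>c\<in>K. ball c e))"
  shows "\<exists>r l. strict_mono r \<and> (y \<circ> r) \<longlonglongrightarrow> l"
proof -
  have "compact (closure (range y))"
    using assms range_covered_if_eventually_covered by (metis compact_closure_if_totally_bounded)
  then have "seq_compact (closure (range y))"
    by (rule compact_imp_seq_compact)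
  moreover have "\<forall>n. y n \<in> closure (range y)"
    by (simp add: closure_def)
  ultimately obtain l r where "strict_mono r" "(y \<circ> r) \<longlonglongrightarrow> l"
    by (rule seq_compactE)
  then show ?thesis
    by blast
qed

lemma sup_compact_on_iff_points: "sup_compact_on F A \<longleftrightarrow> (\<forall>x\<in>A. sup_compact_on F {x})"
  by (simp add: sup_compact_on_def)

lemma strongly_remotal_on_iff_points:
  "strongly_remotal_on F A \<longleftrightarrow> (\<forall>x\<in>A. strongly_remotal_on F {x})"
  by (simp add: strongly_remotal_on_def)

lemma sup_compact_on_singleton:
  "sup_compact_on F {x} \<longleftrightarrow> (\<forall>y. (\<forall>n. y n \<in> F) \<and> (\<lambda>n. norm (x - y n)) \<longlonglongrightarrow> rad F x \<longrightarrow>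
      (\<exists>r l. strict_mono r \<and> l \<in> F \<and> (y \<circ> r) \<longlonglongrightarrow> l))"
  by (simp add: sup_compact_on_def)

lemma strongly_remotal_on_singleton:
  "strongly_remotal_on F {x} \<longleftrightarrow> (\<forall>\<epsilon>>0. \<exists>\<delta>>0. Qset F x \<delta> \<subseteq> enlarge (Qset F x 0) \<epsilon>)"
  by (simp add: strongly_remotal_on_def)

lemma sup_compact_on_pointE:
  assumes "sup_compact_on F {x}" "\<forall>n. y n \<in> F" "(\<lambda>n. norm (x - y n)) \<longlonglongrightarrow> rad F x"
  obtains r l where "strict_mono r" "(y \<circ> r) \<longlonglongrightarrow> l" "l \<in> Qset F x 0"
  using assms tendsto_rad_imp_limit_in_Qset unfolding sup_compact_on_singleton by blast

lemma sup_compact_imp_compact_Qset: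
  assumes "bounded F" "sup_compact_on F {x}"
  shows "compact (Qset F x 0)"
proof (rule seq_compact_imp_Heine_Borel, rule seq_compactI)
  fix y :: "nat \<Rightarrow> 'a" assume y: "\<forall>n. y n \<in> Qset F x 0"
  then have "\<forall>n. y n \<in> F"
    using Qset_subset by blast
  moreover have "(\<lambda>n. norm (x - y n)) \<longlonglongrightarrow> rad F x"
    using Qset_tendsto_rad[OF assms(1), where d = "\<lambda>_. 0"] y by simp
  ultimately show "\<exists>l\<in>Qset F x 0. \<exists>r. strict_mono r \<and> (y \<circ> r) \<longlonglongrightarrow> l"
    by (metis sup_compact_on_pointE[OF assms(2)])
qed

lemma sup_compact_imp_strongly_remotal:
  assumes "bounded F" "sup_compact_on F {x}"
  shows "strongly_remotal_on F {x}"
  unfolding strongly_remotal_on_singleton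
proof (intro allI impI, rule ccontr)
  fix \<epsilon> :: real assume "0 < \<epsilon>"
  assume no_\<delta>: "\<not> (\<exists>\<delta>>0. Qset F x \<delta> \<subseteq> enlarge (Qset F x 0) \<epsilon>)"
  have "\<exists>z. z \<in> Qset F x (1 / real (Suc n)) \<and> z \<notin> enlarge (Qset F x 0) \<epsilon>" for n
  proof -
    have "0 < 1 / real (Suc n)"
      by simp
    with no_\<delta> show ?thesis
      by blast
  qed
  then obtain y where y: "\<forall>n. y n \<in> Qset F x (1 / real (Suc n))"
    and far: "\<And>n. y n \<notin> enlarge (Qset F x 0) \<epsilon>"
    by metis
  have "\<forall>n. y n \<in> F"
    using y Qset_subset by blast
  moreover have "(\<lambda>n. norm (x - y n)) \<longlonglongrightarrow> rad F x"
    using Qset_tendsto_rad[OF assms(1) y] tendsto_one_over_Suc by blast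
  ultimately obtain r l where lim: "(y \<circ> r) \<longlonglongrightarrow> l" and "l \<in> Qset F x 0"
    by (rule sup_compact_on_pointE[OF assms(2)])
  from lim have "\<forall>\<^sub>F n in sequentially. dist ((y \<circ> r) n) l < \<epsilon>"
    using \<open>0 < \<epsilon>\<close> by (rule tendstoD)
  then obtain N where "dist (y (r N)) l < \<epsilon>"
    unfolding eventually_sequentially by auto
  then have "y (r N) \<in> cball l \<epsilon>"
    by (simp add: dist_commute)
  then have "y (r N) \<in> enlarge (Qset F x 0) \<epsilon>"
    using \<open>l \<in> Qset F x 0\<close> by (auto simp: enlarge_eq_UN_cball)
  with far show False
    by blast
qed

lemma strongly_remotal_imp_hausdorff_conv:
  assumes "strongly_remotal_on F {x}" "\<forall>n. 0 \<le> d n" "d \<longlonglongrightarrow> 0"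
  shows "hausdorff_conv (\<lambda>n. Qset F x (d n)) (Qset F x 0)"
  unfolding hausdorff_conv_def
proof (intro allI impI)
  fix \<epsilon> :: real assume "0 < \<epsilon>"
  then obtain \<delta> where "0 < \<delta>" and \<delta>: "Qset F x \<delta> \<subseteq> enlarge (Qset F x 0) \<epsilon>"
    using assms(1) unfolding strongly_remotal_on_singleton by blast
  have "\<forall>\<^sub>F n in sequentially. d n < \<delta>"
    using assms(3) \<open>0 < \<delta>\<close> by (rule order_tendstoD(2))
  then show "\<forall>\<^sub>F n in sequentially.
      Qset F x (d n) \<subseteq> enlarge (Qset F x 0) \<epsilon> \<and> Qset F x 0 \<subseteq> enlarge (Qset F x (d n)) \<epsilon>"
  proof (rule eventually_mono)
    fix n assume "d n < \<delta>"
    then have "Qset F x (d n) \<subseteq> enlarge (Qset F x 0) \<epsilon>"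
      using \<delta> Qset_mono[of "d n" \<delta>] by auto
    moreover have "Qset F x 0 \<subseteq> enlarge (Qset F x (d n)) \<epsilon>"
      using Qset_mono[of 0 "d n"] subset_enlarge[of \<epsilon>] assms(2) \<open>0 < \<epsilon>\<close> by force
    ultimately show "Qset F x (d n) \<subseteq> enlarge (Qset F x 0) \<epsilon> \<and> Qset F x 0 \<subseteq> enlarge (Qset F x (d n)) \<epsilon>" ..
  qed
qed

lemma hausdorff_conv_imp_vietoris_conv:
  assumes "compact C0" "hausdorff_conv C C0"
  shows "vietoris_conv C C0"
  unfolding vietoris_conv_def
proof (intro conjI allI impI)
  fix U assume "open U \<and> C0 \<subseteq> U"
  then obtain e where "0 < e" and e: "(\<Union>z\<in>C0. ball z e) \<subseteq> U"
    using compact_subset_open_imp_ball_epsilon_subset[OF assms(1)] by metis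
  have "\<forall>\<^sub>F n in sequentially. C n \<subseteq> enlarge C0 (e/2) \<and> C0 \<subseteq> enlarge (C n) (e/2)"
    using assms(2) half_gt_zero[OF \<open>0 < e\<close>] unfolding hausdorff_conv_def by blast
  then have "\<forall>\<^sub>F n in sequentially. C n \<subseteq> enlarge C0 (e/2)"
    by (rule eventually_mono) blast
  then show "\<forall>\<^sub>F n in sequentially. C n \<subseteq> U"
  proof (rule eventually_mono)
    fix n assume "C n \<subseteq> enlarge C0 (e/2)"
    also have "\<dots> \<subseteq> (\<Union>z\<in>C0. ball z e)"
      using \<open>0 < e\<close> by (intro enlarge_subset_UN_ball) simp
    finally show "C n \<subseteq> U"
      using e by blast
  qed
next
  fix U assume "open U \<and> C0 \<inter> U \<noteq> {}"
  then obtain p e where "p \<in> C0" "0 < e" "ball p e \<subseteq> U"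
    by (meson disjoint_iff openE)
  have "\<forall>\<^sub>F n in sequentially. C n \<subseteq> enlarge C0 (e/2) \<and> C0 \<subseteq> enlarge (C n) (e/2)"
    using assms(2) half_gt_zero[OF \<open>0 < e\<close>] unfolding hausdorff_conv_def by blast
  then have "\<forall>\<^sub>F n in sequentially. C0 \<subseteq> enlarge (C n) (e/2)"
    by (rule eventually_mono) blast
  then show "\<forall>\<^sub>F n in sequentially. C n \<inter> U \<noteq> {}"
  proof (rule eventually_mono)
    fix n assume "C0 \<subseteq> enlarge (C n) (e/2)"
    then obtain c where "c \<in> C n" "dist c p \<le> e/2"
      using \<open>p \<in> C0\<close> by (auto simp: enlarge_eq_UN_cball)
    then have "c \<in> C n \<inter> ball p e"
      using \<open>0 < e\<close> by (simp add: dist_commute)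
    with \<open>ball p e \<subseteq> U\<close> show "C n \<inter> U \<noteq> {}"
      by blast
  qed
qed

lemma sup_compact_if_Qset_covered:
  fixes F :: "'a::banach set"
  assumes "closed F"
    and cover: "\<And>e. 0 < e \<Longrightarrow> \<exists>\<delta>>0. \<exists>K. finite K \<and> Qset F x \<delta> \<subseteq> (\<Union>c\<in>K. ball c e)"
  shows "sup_compact_on F {x}"
  unfolding sup_compact_on_singleton
proof (intro allI impI)
  fix y assume "(\<forall>n. y n \<in> F) \<and> (\<lambda>n. norm (x - y n)) \<longlonglongrightarrow> rad F x"
  then have y: "\<forall>n. y n \<in> F" and lim: "(\<lambda>n. norm (x - y n)) \<longlonglongrightarrow> rad F x"
    by auto
  have "\<exists>r l. strict_mono r \<and> (y \<circ> r) \<longlonglongrightarrow> l"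
  proof (rule convergent_subseq_if_eventually_covered)
    fix e :: real assume "0 < e"
    then obtain \<delta> K where "0 < \<delta>" "finite K" and K: "Qset F x \<delta> \<subseteq> (\<Union>c\<in>K. ball c e)"
      using cover by blast
    have "\<forall>\<^sub>F n in sequentially. y n \<in> Qset F x \<delta>"
      using y lim \<open>0 < \<delta>\<close> by (rule eventually_in_Qset)
    then have "\<forall>\<^sub>F n in sequentially. y n \<in> (\<Union>c\<in>K. ball c e)"
      by (rule eventually_mono) (use K in blast)
    with \<open>finite K\<close> show "\<exists>K. finite K \<and> (\<forall>\<^sub>F n in sequentially. y n \<in> (\<Union>c\<in>K. ball c e))"
      by blast
  qed
  then obtain r l where "strict_mono r" and subseq: "(y \<circ> r) \<longlonglongrightarrow> l"
    by blast
  moreover have "l \<in> F"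
    using assms(1) _ subseq by (rule closed_sequentially) (simp add: y)
  ultimately show "\<exists>r l. strict_mono r \<and> l \<in> F \<and> (y \<circ> r) \<longlonglongrightarrow> l"
    by blast
qed

lemma vietoris_conv_imp_sup_compact:
  fixes F :: "'a::banach set"
  assumes "closed F" "\<forall>n. 0 < d n" "compact (Qset F x 0)"
    and "vietoris_conv (\<lambda>n. Qset F x (d n)) (Qset F x 0)"
  shows "sup_compact_on F {x}"
proof (rule sup_compact_if_Qset_covered[OF assms(1)])
  fix e :: real assume "0 < e"
  then obtain K where "finite K" and K: "Qset F x 0 \<subseteq> (\<Union>c\<in>K. ball c e)"
    using assms(3) unfolding compact_eq_totally_bounded by blast
  moreover have "open (\<Union>c\<in>K. ball c e)"
    by auto
  ultimately have "\<forall>\<^sub>F n in sequentially. Qset F x (d n) \<subseteq> (\<Union>c\<in>K. ball c e)"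
    using assms(4) unfolding vietoris_conv_def by simp
  then obtain N where "Qset F x (d N) \<subseteq> (\<Union>c\<in>K. ball c e)"
    unfolding eventually_sequentially by auto
  with \<open>finite K\<close> assms(2) show "\<exists>\<delta>>0. \<exists>K. finite K \<and> Qset F x \<delta> \<subseteq> (\<Union>c\<in>K. ball c e)"
    by (intro exI[of _ "d N"]) auto
qed

lemma strongly_remotal_imp_kuratowski_tendsto:
  assumes "bounded F" "d \<longlonglongrightarrow> 0" "compact (Qset F x 0)" "strongly_remotal_on F {x}"
  shows "(\<lambda>n. kuratowski (Qset F x (d n))) \<longlonglongrightarrow> 0"
proof (rule order_tendstoI)
  fix a :: real assume "a < 0"
  moreover have "0 \<le> kuratowski (Qset F x (d n))" for n
    using assms(1) Qset_subset bounded_subset kuratowski_nonneg by metis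
  ultimately show "\<forall>\<^sub>F n in sequentially. a < kuratowski (Qset F x (d n))"
    by (auto intro: always_eventually less_le_trans)
next
  fix e :: real assume "0 < e"
  then obtain K where "finite K" and K: "Qset F x 0 \<subseteq> (\<Union>c\<in>K. ball c (e/4))"
    using assms(3) unfolding compact_eq_totally_bounded by (meson zero_less_divide_iff zero_less_numeral)
  obtain \<delta> where "0 < \<delta>" and \<delta>: "Qset F x \<delta> \<subseteq> enlarge (Qset F x 0) (e/4)"
    using assms(4) \<open>0 < e\<close> unfolding strongly_remotal_on_singleton by (meson zero_less_divide_iff zero_less_numeral)
  have "\<forall>\<^sub>F n in sequentially. d n < \<delta>"
    using assms(2) \<open>0 < \<delta>\<close> by (rule order_tendstoD(2))
  then show "\<forall>\<^sub>F n in sequentially. kuratowski (Qset F x (d n)) < e"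
  proof (rule eventually_mono)
    fix n assume "d n < \<delta>"
    then have "Qset F x (d n) \<subseteq> enlarge (Qset F x 0) (e/4)"
      using \<delta> Qset_mono[of "d n" \<delta>] by auto
    also have "\<dots> \<subseteq> enlarge K (e/4 + e/4)"
      using K by (rule enlarge_subset_enlarge_centres)
    finally have "kuratowski (Qset F x (d n)) \<le> e/4 + e/4"
      using \<open>0 < e\<close> \<open>finite K\<close> by (intro kuratowski_le) auto
    with \<open>0 < e\<close> show "kuratowski (Qset F x (d n)) < e"
      by linarith
  qed
qed

lemma kuratowski_tendsto_imp_sup_compact:
  fixes F :: "'a::banach set"
  assumes "bounded F" "closed F" "\<forall>n. 0 < d n" "(\<lambda>n. kuratowski (Qset F x (d n))) \<longlonglongrightarrow> 0"
  shows "sup_compact_on F {x}"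
proof (rule sup_compact_if_Qset_covered[OF assms(2)])
  fix e :: real assume "0 < e"
  with assms(4) obtain N where "kuratowski (Qset F x (d N)) < e"
    by (metis eventually_sequentially order_tendstoD(2) order_refl)
  moreover have "bounded (Qset F x (d N))"
    using assms(1) Qset_subset bounded_subset by metis
  ultimately obtain K where "finite K" "Qset F x (d N) \<subseteq> (\<Union>c\<in>K. ball c e)"
    using kuratowski_lessE by metis
  with assms(3) show "\<exists>\<delta>>0. \<exists>K. finite K \<and> Qset F x \<delta> \<subseteq> (\<Union>c\<in>K. ball c e)"
    by blast
qed

lemma sup_compact_on_point_iff:
  fixes F :: "'a::banach set"
  assumes "bounded F" "closed F" "\<forall>n. 0 < d n" "d \<longlonglongrightarrow> 0"
  shows "(sup_compact_on F {x} \<longleftrightarrow>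
            compact (Qset F x 0) \<and> vietoris_conv (\<lambda>n. Qset F x (d n)) (Qset F x 0))
    \<and> (sup_compact_on F {x} \<longleftrightarrow>
            compact (Qset F x 0) \<and> hausdorff_conv (\<lambda>n. Qset F x (d n)) (Qset F x 0))
    \<and> (sup_compact_on F {x} \<longleftrightarrow> compact (Qset F x 0) \<and> strongly_remotal_on F {x})
    \<and> (sup_compact_on F {x} \<longleftrightarrow> (\<lambda>n. kuratowski (Qset F x (d n))) \<longlonglongrightarrow> 0)"
proof -
  have "\<forall>n. 0 \<le> d n"
    using assms(3) less_imp_le by blast
  then show ?thesis
    using sup_compact_imp_compact_Qset[OF assms(1)] sup_compact_imp_strongly_remotal[OF assms(1)]
      strongly_remotal_imp_hausdorff_conv[of F x d] hausdorff_conv_imp_vietoris_conv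
      vietoris_conv_imp_sup_compact[OF assms(2,3)]
      strongly_remotal_imp_kuratowski_tendsto[OF assms(1,4)]
      kuratowski_tendsto_imp_sup_compact[OF assms(1-3)] assms(4)
    by blast
qed

(* The library's closed_sphere is stated for heine_borel spaces only. *)
lemma closed_sphere_metric: "closed (sphere (a::'a::metric_space) r)"
  by (metis cball_diff_eq_sphere closed_Diff closed_cball open_ball)

lemma rad_sphere:
  fixes x :: "'a::real_normed_vector"
  assumes "x \<noteq> 0"
  shows "rad (sphere 0 1) x = norm x + 1"
  unfolding rad_def
proof (rule cSup_eq_maximum)
  let ?u = "- (1 / norm x) *\<^sub>R x"
  have "norm (x - ?u) = norm ((1 + 1 / norm x) *\<^sub>R x)"
    by (simp add: algebra_simps)
  also have "\<dots> = norm x + 1"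
    using assms by (simp add: distrib_right add_pos_pos)
  finally show "norm x + 1 \<in> (\<lambda>y. norm (x - y)) ` sphere 0 1"
    using assms by (intro image_eqI[of _ _ ?u]) simp_all
next
  fix r assume "r \<in> (\<lambda>y. norm (x - y)) ` sphere 0 1"
  then obtain y where "norm y = 1" "r = norm (x - y)"
    by auto
  then show "r \<le> norm x + 1"
    using norm_triangle_ineq4[of x y] by simp
qed

(* Combines t u + y = (u + y) + (t - 1) u for t \<ge> 1 and t u + y = t (u + y) + (1 - t) y for t < 1;
   the bound tends to 2 as ||t u + y|| tends to t + 1. *)
lemma norm_add_unit_lower_bound:
  fixes u y :: "'a::real_normed_vector"
  assumes "norm u = 1" "norm y = 1" "0 < t"
  shows "2 - (t + 1 - norm (t *\<^sub>R u + y)) / min t 1 \<le> norm (u + y)"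
proof (cases "1 \<le> t")
  case True
  have "norm (t *\<^sub>R u + y) = norm ((u + y) + (t - 1) *\<^sub>R u)"
    by (simp add: algebra_simps)
  also have "\<dots> \<le> norm (u + y) + norm ((t - 1) *\<^sub>R u)"
    by (rule norm_triangle_ineq)
  also have "norm ((t - 1) *\<^sub>R u) = t - 1"
    using True assms(1) by simp
  finally show ?thesis
    using True by simp
next
  case False
  have "norm (t *\<^sub>R u + y) = norm (t *\<^sub>R (u + y) + (1 - t) *\<^sub>R y)"
    by (simp add: algebra_simps)
  also have "\<dots> \<le> norm (t *\<^sub>R (u + y)) + norm ((1 - t) *\<^sub>R y)"
    by (rule norm_triangle_ineq)
  also have "\<dots> = t * norm (u + y) + (1 - t)"
    using False assms by simp
  finally show ?thesis
    using False assms(3) by (simp add: field_simps)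
qed

lemma CLUR_imp_sup_compact_sphere:
  assumes "CLUR TYPE('a::real_normed_vector)"
  shows "sup_compact_on (sphere (0::'a) 1) (- {0})"
  unfolding sup_compact_on_def
proof (intro ballI allI impI)
  fix x :: 'a and y
  assume "x \<in> - {0}" and "(\<forall>n. y n \<in> sphere 0 1) \<and> (\<lambda>n. norm (x - y n)) \<longlonglongrightarrow> rad (sphere 0 1) x"
  then have "x \<noteq> 0" and y: "\<forall>n. y n \<in> sphere 0 1"
    and lim: "(\<lambda>n. norm (x - y n)) \<longlonglongrightarrow> norm x + 1"
    by (simp_all add: rad_sphere)
  define t where "t = norm x"
  define u where "u = - (1 / t) *\<^sub>R x"
  have "0 < t" "norm u = 1"
    using \<open>x \<noteq> 0\<close> by (simp_all add: t_def u_def)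
  have lower: "2 - (t + 1 - norm (x - y n)) / min t 1 \<le> norm (u + y n)" for n
  proof -
    have "x - y n = - (t *\<^sub>R u + y n)"
      using \<open>0 < t\<close> by (simp add: u_def)
    then have "norm (x - y n) = norm (t *\<^sub>R u + y n)"
      by (simp only: norm_minus_cancel)
    with norm_add_unit_lower_bound[OF \<open>norm u = 1\<close> _ \<open>0 < t\<close>, of "y n"] y show ?thesis
      by simp
  qed
  have upper: "norm (u + y n) \<le> 2" for n
    using norm_triangle_ineq[of u "y n"] y \<open>norm u = 1\<close> by simp
  have "(\<lambda>n. norm (u + y n)) \<longlonglongrightarrow> 2"
  proof (rule real_tendsto_sandwich[OF _ _ _ tendsto_const])
    have "(\<lambda>n. 2 - (t + 1 - norm (x - y n)) / min t 1) \<longlonglongrightarrow> 2 - (t + 1 - (norm x + 1)) / min t 1"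
      using \<open>0 < t\<close> by (intro tendsto_intros lim) simp
    then show "(\<lambda>n. 2 - (t + 1 - norm (x - y n)) / min t 1) \<longlonglongrightarrow> 2"
      by (simp add: t_def)
  qed (use lower upper in simp_all)
  then have "(\<lambda>n. norm (u + y n) / 2) \<longlonglongrightarrow> 2 / 2"
    by (intro tendsto_divide tendsto_const) simp_all
  then have "(\<lambda>n. norm ((1/2) *\<^sub>R (y n + u))) \<longlonglongrightarrow> 1"
    by (simp add: add.commute)
  then obtain r l where "strict_mono r" and subseq: "(y \<circ> r) \<longlonglongrightarrow> l"
    using assms[unfolded CLUR_def, rule_format, of u y] y \<open>norm u = 1\<close> by auto
  moreover have "l \<in> sphere 0 1"
    using closed_sphere_metric _ subseq by (rule closed_sequentially) (use y in simp)
  ultimately show "\<exists>r l. strict_mono r \<and> l \<in> sphere 0 1 \<and> (y \<circ> r) \<longlonglongrightarrow> l"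
    by blast
qed

lemma sup_compact_sphere_imp_CLUR:
  assumes "sup_compact_on (sphere (0::'a::real_normed_vector) 1) (- {0})"
  shows "CLUR TYPE('a)"
  unfolding CLUR_def
proof (intro allI impI)
  fix x :: 'a and xs
  assume "x \<in> sphere 0 1 \<and> (\<forall>n. xs n \<in> sphere 0 1) \<and> (\<lambda>n. norm ((1/2) *\<^sub>R (xs n + x))) \<longlonglongrightarrow> 1"
  then have "norm x = 1" and xs: "\<forall>n. xs n \<in> sphere 0 1"
    and lim: "(\<lambda>n. norm ((1/2) *\<^sub>R (xs n + x))) \<longlonglongrightarrow> 1"
    by auto
  have "- x \<noteq> 0"
    using \<open>norm x = 1\<close> by auto
  have "(\<lambda>n. 2 * norm ((1/2) *\<^sub>R (xs n + x))) \<longlonglongrightarrow> 2 * 1"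
    using lim by (intro tendsto_mult tendsto_const)
  moreover have "2 * norm ((1/2) *\<^sub>R (xs n + x)) = norm (- x - xs n)" for n
  proof -
    have "- x - xs n = - (xs n + x)"
      by simp
    then show ?thesis
      by (simp only: norm_minus_cancel) simp
  qed
  ultimately have "(\<lambda>n. norm (- x - xs n)) \<longlonglongrightarrow> rad (sphere 0 1) (- x)"
    using \<open>norm x = 1\<close> by (simp add: rad_sphere[OF \<open>- x \<noteq> 0\<close>])
  with assms xs \<open>- x \<noteq> 0\<close> show "\<exists>r l. strict_mono r \<and> (xs \<circ> r) \<longlonglongrightarrow> l"
    unfolding sup_compact_on_def by blast
qed

lemma CLUR_iff_sup_compact_sphere:
  "CLUR TYPE('a::real_normed_vector) \<longleftrightarrow> sup_compact_on (sphere (0::'a) 1) (- {0})"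
  using CLUR_imp_sup_compact_sphere sup_compact_sphere_imp_CLUR by blast

theorem theorem3p4:
  fixes TYPE_X :: "'a::banach itself"
  defines "S \<equiv> sphere (0::'a) 1"
  shows "(CLUR TYPE('a) \<longleftrightarrow> sup_compact_on S (- {0}))
    \<and> (CLUR TYPE('a) \<longleftrightarrow> (\<forall>x. x \<noteq> 0 \<longrightarrow> compact (Qset S x 0) \<and>
          vietoris_conv (\<lambda>n. Qset S x (1 / real (Suc n))) (Qset S x 0)))
    \<and> (CLUR TYPE('a) \<longleftrightarrow> (\<forall>x. x \<noteq> 0 \<longrightarrow> compact (Qset S x 0) \<and>
          hausdorff_conv (\<lambda>n. Qset S x (1 / real (Suc n))) (Qset S x 0)))
    \<and> (CLUR TYPE('a) \<longleftrightarrow> (\<forall>x. x \<noteq> 0 \<longrightarrow> compact (Qset S x 0)) \<and>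
          strongly_remotal_on S (- {0}))
    \<and> (CLUR TYPE('a) \<longleftrightarrow> (\<forall>x. x \<noteq> 0 \<longrightarrow>
          (\<lambda>n. kuratowski (Qset S x (1 / real (Suc n)))) \<longlonglongrightarrow> 0))"
proof -
  have "bounded S" "closed S" "\<forall>n. 0 < 1 / real (Suc n)"
    by (simp_all add: S_def closed_sphere_metric bounded_subset[OF bounded_cball sphere_cball])
  note pointwise = sup_compact_on_point_iff[OF this tendsto_one_over_Suc]
  have CLUR: "CLUR TYPE('a) \<longleftrightarrow> (\<forall>x. x \<noteq> 0 \<longrightarrow> sup_compact_on S {x})"
    unfolding CLUR_iff_sup_compact_sphere S_def sup_compact_on_iff_points[of _ "- {0}"] by auto
  have SR: "strongly_remotal_on S (- {0}) \<longleftrightarrow> (\<forall>x. x \<noteq> 0 \<longrightarrow> strongly_remotal_on S {x})"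
    unfolding strongly_remotal_on_iff_points[of _ "- {0}"] by auto
  show ?thesis
  proof (intro conjI)
    show "CLUR TYPE('a) \<longleftrightarrow> sup_compact_on S (- {0})"
      unfolding S_def by (rule CLUR_iff_sup_compact_sphere)
  qed (simp only: CLUR SR, use pointwise in blast)+
qed

end
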